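(* Let $\Omega=\{\omega_1<\dots<\omega_{|\mathcal{X}|}\}\subset\{1,\dots,|\mathcal{Y}|\}$ with $M_\Omega$ invertible, let $A=M_{\Omega}^{-1}M(1\!:\!|\mathcal{X}|)P_{X|Y_1}^{-1}$ with columns $a_1,\dots,a_{|\mathcal{X}|}$, and let $J_u\in\mathbb{R}^{|\mathcal{X}|}$ satisfy $\sum_x|J_u(x)|\le1$. Define $V\in\mathbb{R}^{|\mathcal{Y}|}$ by $V(\omega_i)=(M_\Omega^{-1}M\begin{bmatrix}P_{X|Y_1}^{-1}J_u\\0\end{bmatrix})(i)$ for $1\le i\le|\mathcal{X}|$ and $V(j)=0$ for $j\notin\Omega$. Then $\|V\|_1\le r$, where $r=\max_i \mathbf{1}^T|a_i|$ and $|a_i|$ denotes the entrywise absolute value of $a_i$.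
   Context: Setting: $X,Y$ on finite alphabets with $|\mathcal{X}|<|\mathcal{Y}|$; $P_{X|Y}\in\mathbb{R}^{|\mathcal{X}|\times|\mathcal{Y}|}$ has full row rank and $P_{X|Y}=[P_{X|Y_1},P_{X|Y_2}]$ with $P_{X|Y_1}$ (first $|\mathcal{X}|$ columns) invertible. With an SVD $P_{X|Y}=U\Sigma V^T$, $V=[v_1,\dots,v_{|\mathcal{Y}|}]$, set $M=[v_1,\dots,v_{|\mathcal{X}|}]^T$. $M_\Omega$ is the submatrix of $M$ with columns indexed by $\Omega$, and $M(1\!:\!|\mathcal{X}|)$ the submatrix of its first $|\mathcal{X}|$ columns. The zero block has size $|\mathcal{Y}|-|\mathcal{X}|$. *)

theory Defs
  imports "Jordan_Normal_Form.Gauss_Jordan_Elimination" "Jordan_Normal_Form.DL_Rank"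
begin

definition minv :: "real mat \<Rightarrow> real mat" where
  "minv A = the (mat_inverse A)"

definition sel_cols :: "real mat \<Rightarrow> (nat \<Rightarrow> nat) \<Rightarrow> nat \<Rightarrow> real mat" where
  "sel_cols A om k = mat (dim_row A) k (\<lambda>(i,j). A $$ (i, om j))"

definition first_cols :: "real mat \<Rightarrow> nat \<Rightarrow> real mat" where
  "first_cols A k = mat (dim_row A) k (\<lambda>(i,j). A $$ (i, j))"

definition norm1 :: "real vec \<Rightarrow> real" where
  "norm1 v = (\<Sum>i<dim_vec v. \<bar>v $ i\<bar>)"

end

theory Submission
  imports Defs
begin

(* V only scatters the n entries of y into the positions om 0, ..., om (n - 1) of a
   zero vector, so norm1 V = norm1 y. Since z is P1i J padded with zeros, M z = M(1:n) P1i J and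
   hence y = A J. The l1-norm of A J is at most the largest l1-norm of a column of A times
   norm1 J, which is at most 1. The stochasticity of P and the singular value decomposition
   play no role: only the dimensions and the invertibility of the two inverted matrices are used. *)

lemma minv_carrier:
  assumes A: "A \<in> carrier_mat n n" and inv: "invertible_mat A"
  shows "minv A \<in> carrier_mat n n"
proof -
  from inv obtain B where AB: "A * B = 1\<^sub>m n" and BA: "B * A = 1\<^sub>m (dim_row B)"
    unfolding invertible_mat_def inverts_mat_def using A by auto
  have "dim_col B = n" using arg_cong[OF AB, of dim_col] by simp
  moreover have "dim_row B = n" using arg_cong[OF BA, of dim_col] A by simp
  ultimately have "A \<in> Units (ring_mat TYPE(real) n ())"
    unfolding Units_def ring_mat_def using A AB BA by auto
  then obtain C where "mat_inverse A = Some C"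
    using mat_inverse(1)[OF A, of "()"] by fastforce
  then show ?thesis using mat_inverse(2)[OF A] unfolding minv_def by auto
qed

lemma mult_mat_vec_zero_padded:
  assumes M: "M \<in> carrier_mat n m" and "k \<le> m" and w: "w \<in> carrier_vec k"
  shows "M *\<^sub>v vec m (\<lambda>j. if j < k then w $ j else 0) = first_cols M k *\<^sub>v w"
proof (rule eq_vecI)
  fix i assume "i < dim_vec (first_cols M k *\<^sub>v w)"
  then have i: "i < n" using M by (simp add: first_cols_def)
  have "(\<Sum>j<m. M $$ (i,j) * (if j < k then w $ j else 0)) = (\<Sum>j<k. M $$ (i,j) * w $ j)"
    by (rule sum.mono_neutral_cong_right) (use \<open>k \<le> m\<close> in auto)
  then show "(M *\<^sub>v vec m (\<lambda>j. if j < k then w $ j else 0)) $ i = (first_cols M k *\<^sub>v w) $ i"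
    using M w i \<open>k \<le> m\<close>
    by (simp add: mult_mat_vec_def scalar_prod_def first_cols_def lessThan_atLeast0)
qed (use M in \<open>simp add: first_cols_def\<close>)

lemma norm1_scatter:
  assumes inj: "inj_on om {..<n}" and om: "om ` {..<n} \<subseteq> {..<m}" and y: "y \<in> carrier_vec n"
  shows "norm1 (vec m (\<lambda>j. if j \<in> om ` {..<n} then y $ (THE i. i < n \<and> om i = j) else 0)) = norm1 y"
    (is "norm1 ?V = _")
proof -
  have "norm1 ?V = (\<Sum>j<m. \<bar>?V $ j\<bar>)" by (simp add: norm1_def)
  also have "\<dots> = (\<Sum>j\<in>om ` {..<n}. \<bar>?V $ j\<bar>)"
    by (rule sum.mono_neutral_right) (use om in auto)
  also have "\<dots> = (\<Sum>i<n. \<bar>?V $ om i\<bar>)"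
    by (rule sum.reindex[OF inj, unfolded comp_def])
  also have "\<dots> = (\<Sum>i<n. \<bar>y $ i\<bar>)"
  proof (rule sum.cong)
    fix i assume i: "i \<in> {..<n}"
    then have "(THE i'. i' < n \<and> om i' = om i) = i"
      using inj by (auto intro!: the_equality dest: inj_onD)
    then show "\<bar>?V $ om i\<bar> = \<bar>y $ i\<bar>" using i om by auto
  qed simp
  finally show ?thesis using y by (simp add: norm1_def)
qed

lemma norm1_mult_mat_vec_le:
  assumes A: "A \<in> carrier_mat n k" and x: "x \<in> carrier_vec k"
    and col: "\<And>j. j < k \<Longrightarrow> (\<Sum>i<n. \<bar>A $$ (i,j)\<bar>) \<le> c"
  shows "norm1 (A *\<^sub>v x) \<le> c * norm1 x"
proof -
  have "norm1 (A *\<^sub>v x) = (\<Sum>i<n. \<bar>\<Sum>j<k. A $$ (i,j) * x $ j\<bar>)"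
    using A x by (simp add: norm1_def mult_mat_vec_def scalar_prod_def lessThan_atLeast0)
  also have "\<dots> \<le> (\<Sum>i<n. \<Sum>j<k. \<bar>A $$ (i,j)\<bar> * \<bar>x $ j\<bar>)"
    by (intro sum_mono order.trans[OF sum_abs]) (simp add: abs_mult)
  also have "\<dots> = (\<Sum>j<k. (\<Sum>i<n. \<bar>A $$ (i,j)\<bar>) * \<bar>x $ j\<bar>)"
    by (subst sum.swap) (simp add: sum_distrib_right)
  also have "\<dots> \<le> (\<Sum>j<k. c * \<bar>x $ j\<bar>)"
    by (intro sum_mono mult_right_mono col) auto
  also have "\<dots> = c * norm1 x"
    using x by (simp add: norm1_def sum_distrib_left)
  finally show ?thesis .
qed

theorem proposition7:
  fixes n m :: nat and P U S W :: "real mat" and om :: "nat \<Rightarrow> nat" and J :: "real vec"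
  assumes "0 < n" and "n < m"
    and P: "P \<in> carrier_mat n m"
    and "\<forall>i<n. \<forall>j<m. 0 \<le> P $$ (i,j)"
    and "\<forall>j<m. (\<Sum>i<n. P $$ (i,j)) = 1"
    and "vec_space.rank n P = n"
    and "invertible_mat (first_cols P n)"
    and "U \<in> carrier_mat n n" and "U * U\<^sup>T = 1\<^sub>m n" and "U\<^sup>T * U = 1\<^sub>m n"
    and "W \<in> carrier_mat m m" and "W * W\<^sup>T = 1\<^sub>m m" and "W\<^sup>T * W = 1\<^sub>m m"
    and "S \<in> carrier_mat n m"
    and "\<forall>i<n. \<forall>j<m. i \<noteq> j \<longrightarrow> S $$ (i,j) = 0"
    and "\<forall>i<n. 0 \<le> S $$ (i,i)"
    and "\<forall>i j. i \<le> j \<longrightarrow> j < n \<longrightarrow> S $$ (j,j) \<le> S $$ (i,i)"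
    and "P = U * S * W\<^sup>T"
    and "strict_mono_on {..<n} om" and "\<forall>i<n. om i < m"
    and "invertible_mat (sel_cols (mat n m (\<lambda>(i,j). W $$ (j,i))) om n)"
    and "J \<in> carrier_vec n" and "(\<Sum>x<n. \<bar>J $ x\<bar>) \<le> 1"
  shows
    "let M = mat n m (\<lambda>(i,j). W $$ (j,i));
         P1i = minv (first_cols P n);
         MOi = minv (sel_cols M om n);
         A = MOi * first_cols M n * P1i;
         r = Max {(\<Sum>k<n. \<bar>A $$ (k,i)\<bar>) | i. i < n};
         z = vec m (\<lambda>j. if j < n then (P1i *\<^sub>v J) $ j else 0);
         y = MOi *\<^sub>v (M *\<^sub>v z);
         V = vec m (\<lambda>j. if j \<in> om ` {..<n} then y $ (THE i. i < n \<and> om i = j) else 0)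
     in norm1 V \<le> r"
proof -
  define M where "M = mat n m (\<lambda>(i,j). W $$ (j,i))"
  define P1i where "P1i = minv (first_cols P n)"
  define MOi where "MOi = minv (sel_cols M om n)"
  define A where "A = MOi * first_cols M n * P1i"
  define r where "r = Max {(\<Sum>k<n. \<bar>A $$ (k,i)\<bar>) | i. i < n}"
  have M: "M \<in> carrier_mat n m" by (simp add: M_def)
  have P1i: "P1i \<in> carrier_mat n n"
    unfolding P1i_def using P assms(7) by (intro minv_carrier) (auto simp: first_cols_def)
  have MOi: "MOi \<in> carrier_mat n n"
    unfolding MOi_def using assms(21) by (intro minv_carrier) (auto simp: M_def sel_cols_def)
  have M1: "first_cols M n \<in> carrier_mat n n" using M by (simp add: first_cols_def)
  have A: "A \<in> carrier_mat n n" using MOi M1 P1i by (simp add: A_def)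
  have y: "MOi *\<^sub>v (M *\<^sub>v vec m (\<lambda>j. if j < n then (P1i *\<^sub>v J) $ j else 0)) = A *\<^sub>v J"
    using MOi M1 P1i assms(2,22)
    by (simp add: mult_mat_vec_zero_padded[OF M] A_def assoc_mult_mat_vec[of _ n n _ n])
  have "r \<ge> 0"
  proof -
    have "0 \<le> (\<Sum>k<n. \<bar>A $$ (k,0)\<bar>)" by (simp add: sum_nonneg)
    also have "\<dots> \<le> r" unfolding r_def using assms(1) by (intro Max_ge) auto
    finally show ?thesis .
  qed
  have "norm1 (vec m (\<lambda>j. if j \<in> om ` {..<n} then (A *\<^sub>v J) $ (THE i. i < n \<and> om i = j) else 0))
    = norm1 (A *\<^sub>v J)"
    using strict_mono_on_imp_inj_on[OF assms(19)] assms(20) mult_mat_vec_carrier[OF A assms(22)]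
    by (intro norm1_scatter) auto
  also have "\<dots> \<le> r * norm1 J"
    using A assms(22) by (rule norm1_mult_mat_vec_le) (auto simp: r_def intro!: Max_ge)
  also have "\<dots> \<le> r"
    using \<open>r \<ge> 0\<close> assms(22,23) by (simp add: norm1_def mult_left_le)
  finally show ?thesis
    unfolding Let_def M_def[symmetric] P1i_def[symmetric] MOi_def[symmetric] A_def[symmetric]
      r_def[symmetric] y .
qed

end
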